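(* Let $w$ be a word over the alphabet $\{a^{\pm1},t^{\pm1},x^{\pm1}\}$ with $\sigma_x(w)=0$. If the equation $w=1$ has a solution in $L_2$, then it has a solution $x=(\delta,f)\in L_2$ with $$|\delta|\le 2^{|w|^2/2}+2|w|^2+3|w|+1 .$$
   Context: $\mathbb{Z}_2$ is the field with two elements and $\mathbb{Z}_2[z^{\pm1}]$ the ring of Laurent polynomials over it. The lamplighter group $L_2=\mathbb{Z}_2\wr\mathbb{Z}$ is realized as the set $\mathbb{Z}\times\mathbb{Z}_2[z^{\pm1}]$ with multiplication $(\delta_1,f_1)(\delta_2,f_2)=(\delta_1+\delta_2,\ f_1z^{-\delta_2}+f_2)$; it is generated by $a=(0,1)$ and $t=(1,0)$. A one-variable equation is given by a word $w$ over $\{a^{\pm1},t^{\pm1},x^{\pm1}\}$ (an element of the free group $F(a,t,x)$), $|w|$ is its length, and a solution of $w=1$ is an element $g\in L_2$ such that $w(a,t,g)=1$ in $L_2$, where $w(a,t,g)$ is the image of $w$ under the homomorphism $F(a,t,x)\to L_2$ with $a\mapsto a$, $t\mapsto t$, $x\mapsto g$. $\sigma_x(w)$ and $\sigma_t(w)$ denote the exponent sums of $x$ and of $t$ in $w$. *)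

theory Defs
  imports Complex_Main
begin

text \<open>Lamplighter group L2 = Z2 wr Z as pairs (delta, f) with f a finitely supported
  function int => bool (f n = coefficient of z^n in the Laurent polynomial over Z2).
  Multiplication (d1,f1)(d2,f2) = (d1+d2, f1 z^(-d2) + f2).\<close>

type_synonym lamp = "int \<times> (int \<Rightarrow> bool)"

definition in_L2 :: "lamp \<Rightarrow> bool" where
  "in_L2 g \<longleftrightarrow> finite {n. snd g n}"

definition lmult :: "lamp \<Rightarrow> lamp \<Rightarrow> lamp" where
  "lmult g h = (fst g + fst h, (\<lambda>n. snd g (n + fst h) \<noteq> snd h n))"

definition lone :: lamp where
  "lone = (0, (\<lambda>n. False))"

definition linv :: "lamp \<Rightarrow> lamp" where
  "linv g = (- fst g, (\<lambda>n. snd g (n - fst g)))"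

definition gen_a :: lamp where
  "gen_a = (0, (\<lambda>n. n = 0))"

definition gen_t :: lamp where
  "gen_t = (1, (\<lambda>n. False))"

datatype letter = LA | LT | LX

text \<open>A word over {a^{+-1}, t^{+-1}, x^{+-1}}: list of (letter, sign), True = exponent +1.\<close>
type_synonym word = "(letter \<times> bool) list"

fun letter_val :: "lamp \<Rightarrow> letter \<Rightarrow> lamp" where
  "letter_val g LA = gen_a"
| "letter_val g LT = gen_t"
| "letter_val g LX = g"

definition sym_val :: "lamp \<Rightarrow> letter \<times> bool \<Rightarrow> lamp" where
  "sym_val g s = (if snd s then letter_val g (fst s) else linv (letter_val g (fst s)))"

definition eval_word :: "word \<Rightarrow> lamp \<Rightarrow> lamp" where
  "eval_word w g = foldr (\<lambda>s acc. lmult (sym_val g s) acc) w lone"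

definition sigma_x :: "word \<Rightarrow> int" where
  "sigma_x w = (\<Sum>s\<leftarrow>w. if fst s = LX then (if snd s then 1 else -1) else 0)"

definition is_solution :: "word \<Rightarrow> lamp \<Rightarrow> bool" where
  "is_solution w g \<longleftrightarrow> in_L2 g \<and> eval_word w g = lone"

end

theory Submission
  imports Defs "HOL-Library.Multiset" "HOL-Library.Sublist"
begin

text \<open>
  Write the unknown as \<open>x = (d, f)\<close>. When \<open>\<sigma>\<^sub>x(w) = 0\<close>, the equation \<open>w = 1\<close> says that
  \<open>\<sigma>\<^sub>t(w) = 0\<close> and that, over \<open>\<int>\<^sub>2\<close>, a sum of translates \<open>f(N + c d + b)\<close> of \<open>f\<close> equals a sum of
  point masses at \<open>-(c d + b)\<close>, where the pairs \<open>(c, b)\<close> are exponent sums of suffixes of \<open>w\<close>.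
  These pairs lie in a box of size \<open>H \<times> \<tau>\<close> with \<open>2 H + 2 \<tau> \<le> |w|\<close>; after an affine change of
  coordinates the box is \<open>[0, H] \<times> [0, \<tau>]\<close> and \<open>d > 0\<close>, and then comparing extreme points shows
  that some solution for the same \<open>d\<close> is supported in \<open>|N| \<le> H d + \<tau>\<close>.
  If \<open>d > 2^((2H+2)\<tau>) + \<tau>\<close>, the pigeonhole principle yields offsets \<open>r < r'\<close> at which \<open>f\<close> shows
  the same pattern on every window \<open>q d + r + [0, \<tau>)\<close>; excising \<open>[r, r')\<close> from every period of
  length \<open>d\<close> turns the solution into one for \<open>d - (r' - r)\<close>. Descending in this way bounds \<open>|d|\<close>
  by \<open>2^((2H+2)\<tau>) + \<tau>\<close>, which is below the stated bound.
\<close>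

definition letter_exp :: "letter \<Rightarrow> letter \<times> bool \<Rightarrow> int" where
  "letter_exp l s = (if fst s = l then (if snd s then 1 else -1) else 0)"

definition exp_sum :: "letter \<Rightarrow> word \<Rightarrow> int" where
  "exp_sum l w = sum_list (map (letter_exp l) w)"

lemma sigma_x_eq_exp_sum: "sigma_x w = exp_sum LX w"
  by (simp add: sigma_x_def exp_sum_def letter_exp_def[abs_def])

lemma exp_sum_Cons [simp]: "exp_sum l (s # w) = letter_exp l s + exp_sum l w"
  by (simp add: exp_sum_def)

definition shift_parity :: "(int \<times> int) list \<Rightarrow> int \<Rightarrow> (int \<Rightarrow> bool) \<Rightarrow> int \<Rightarrow> bool" where
  "shift_parity ts d f N \<longleftrightarrow> odd (length (filter (\<lambda>(c, b). f (N + c * d + b)) ts))"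

lemma shift_parity_Nil [simp]: "\<not> shift_parity [] d f N"
  by (simp add: shift_parity_def)

lemma shift_parity_Cons [simp]:
  "shift_parity ((c, b) # ts) d f N \<longleftrightarrow> f (N + c * d + b) \<noteq> shift_parity ts d f N"
  by (simp add: shift_parity_def)

text \<open>
  Evaluating \<open>w\<close> from the right, a letter whose suffix has exponent sums \<open>c\<close> in \<open>x\<close> and \<open>b\<close>
  in \<open>t\<close> acts on the lamps through the translation by \<open>c d + b\<close>: an \<open>x\<close> contributes
  \<open>f(N + c d + b)\<close> (with \<open>c - 1\<close> for \<open>x\<^sup>-\<^sup>1\<close>) and an \<open>a\<^sup>\<plusminus>\<^sup>1\<close> the lamp at \<open>-(c d + b)\<close>.
\<close>

fun x_shifts :: "word \<Rightarrow> (int \<times> int) list" where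
  "x_shifts [] = []"
| "x_shifts (s # w) =
    (if fst s = LX then (exp_sum LX w - (if snd s then 0 else 1), exp_sum LT w) # x_shifts w
     else x_shifts w)"

fun a_shifts :: "word \<Rightarrow> (int \<times> int) list" where
  "a_shifts [] = []"
| "a_shifts (s # w) = (if fst s = LA then (exp_sum LX w, exp_sum LT w) # a_shifts w else a_shifts w)"

lemma eval_word_eq:
  "eval_word w (d, f) = (exp_sum LT w + d * exp_sum LX w,
     \<lambda>N. shift_parity (x_shifts w) d f N \<noteq> shift_parity (a_shifts w) d (\<lambda>M. M = 0) N)"
proof (induction w)
  case Nil
  show ?case by (simp add: eval_word_def lone_def exp_sum_def)
next
  case (Cons s w)
  obtain l e where "s = (l, e)" by (cases s)
  with Cons show ?case
    by (cases l; cases e)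
       (auto simp: eval_word_def lmult_def sym_val_def linv_def gen_a_def gen_t_def letter_exp_def
         algebra_simps fun_eq_iff)
qed

definition shift_solution :: "(int \<times> int) list \<Rightarrow> (int \<times> int) list \<Rightarrow> int \<Rightarrow> (int \<Rightarrow> bool) \<Rightarrow> bool" where
  "shift_solution xs as d f \<longleftrightarrow>
     finite {N. f N} \<and> (\<forall>N. shift_parity xs d f N = shift_parity as d (\<lambda>M. M = 0) N)"

lemma is_solution_iff_shift_solution:
  assumes "sigma_x w = 0"
  shows "is_solution w (d, f) \<longleftrightarrow>
    exp_sum LT w = 0 \<and> shift_solution (x_shifts w) (a_shifts w) d f"
  using assms
  by (auto simp: is_solution_def in_L2_def shift_solution_def eval_word_eq lone_def fun_eq_iff
      sigma_x_eq_exp_sum)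

definition odd_part :: "'a multiset \<Rightarrow> 'a set" where
  "odd_part M = {y. odd (count M y)}"

lemma odd_part_subset: "odd_part M \<subseteq> set_mset M"
  by (auto simp: odd_part_def intro: count_inI)

lemma finite_odd_part: "finite (odd_part M)"
  using odd_part_subset finite_set_mset by (rule finite_subset)

lemma odd_part_add_mset:
  "odd_part (add_mset x M) = (if x \<in> odd_part M then odd_part M - {x} else insert x (odd_part M))"
  by (auto simp: odd_part_def)

lemma odd_size_filter_mset_iff:
  "odd (size (filter_mset P M)) \<longleftrightarrow> odd (card {y \<in> odd_part M. P y})"
proof (induction M)
  case empty
  show ?case by (simp add: odd_part_def)
next
  case (add x M)
  let ?T = "{y \<in> odd_part M. P y}"
  have "finite ?T" using finite_odd_part[of M] by auto
  show ?case
  proof (cases "P x")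
    case False
    then have "{y \<in> odd_part (add_mset x M). P y} = ?T"
      by (auto simp: odd_part_add_mset)
    with False add.IH show ?thesis by simp
  next
    case True
    then have "{y \<in> odd_part (add_mset x M). P y} = (if x \<in> ?T then ?T - {x} else insert x ?T)"
      by (auto simp: odd_part_add_mset)
    then show ?thesis
      using True add.IH \<open>finite ?T\<close> by (cases "x \<in> ?T") (auto simp: card_gt_0_iff)
  qed
qed

definition shift_offsets :: "(int \<times> int) list \<Rightarrow> int \<Rightarrow> int multiset" where
  "shift_offsets ts d = mset (map (\<lambda>(c, b). c * d + b) ts)"

lemma shift_parity_iff_odd_part:
  "shift_parity ts d f N \<longleftrightarrow> odd (card {s \<in> odd_part (shift_offsets ts d). f (N + s)})"
proof -
  have "size (filter_mset (\<lambda>s. f (N + s)) (shift_offsets ts d))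
      = length (filter (\<lambda>s. f (N + s)) (map (\<lambda>(c, b). c * d + b) ts))"
    unfolding shift_offsets_def mset_filter[symmetric] size_mset ..
  then have "shift_parity ts d f N \<longleftrightarrow> odd (size (filter_mset (\<lambda>s. f (N + s)) (shift_offsets ts d)))"
    by (simp add: shift_parity_def filter_map comp_def split_def add.assoc)
  then show ?thesis by (simp add: odd_size_filter_mset_iff)
qed

lemma shift_parityE:
  assumes "shift_parity ts d f N"
  obtains c b where "(c, b) \<in> set ts" and "f (N + c * d + b)"
proof -
  have "filter (\<lambda>(c, b). f (N + c * d + b)) ts \<noteq> []"
    using assms by (auto simp: shift_parity_def)
  then obtain cb where "cb \<in> set ts" "(\<lambda>(c, b). f (N + c * d + b)) cb"
    by (auto simp: filter_empty_conv)
  with that show ?thesis by (cases cb) auto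
qed

lemma offset_in_box:
  assumes "(c, b) \<in> {0..int H} \<times> {0..int \<tau>}" "0 \<le> d"
  shows "0 \<le> c * d + b \<and> c * d + b \<le> int H * d + int \<tau>"
proof -
  have "c * d \<le> int H * d" using assms by (intro mult_right_mono) auto
  with assms show ?thesis by auto
qed

lemma extremal_shifts_unique:
  fixes S T :: "int set"
  assumes "finite S" "finite T" "S \<noteq> {}" "T \<noteq> {}"
  shows "{s \<in> T. Max S - Min T + s \<in> S} = {Min T}"
    and "{s \<in> T. Min S - Max T + s \<in> S} = {Max T}"
proof -
  have "Min T \<in> T" "Max T \<in> T" "Min S \<in> S" "Max S \<in> S"
    using assms by auto
  moreover have "s = Min T" if "s \<in> T" "Max S - Min T + s \<in> S" for s
    using Max_ge[OF assms(1) that(2)] Min_le[OF assms(2) that(1)] by linarith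
  moreover have "s = Max T" if "s \<in> T" "Min S - Max T + s \<in> S" for s
    using Min_le[OF assms(1) that(2)] Max_ge[OF assms(2) that(1)] by linarith
  ultimately show "{s \<in> T. Max S - Min T + s \<in> S} = {Min T}"
    and "{s \<in> T. Min S - Max T + s \<in> S} = {Max T}"
    by auto
qed

lemma shift_solution_bounded_support:
  assumes sol: "shift_solution xs as d f" and "0 < d"
    and box: "set xs \<union> set as \<subseteq> {0..int H} \<times> {0..int \<tau>}"
  obtains f' where "shift_solution xs as d f'" and "\<And>N. f' N \<Longrightarrow> \<bar>N\<bar> \<le> int H * d + int \<tau>"
proof (cases "odd_part (shift_offsets xs d) = {}")
  case True
  then have "\<not> shift_parity xs d g N" for g N
    by (simp add: shift_parity_iff_odd_part)
  with sol have "shift_solution xs as d (\<lambda>_. False)"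
    by (simp add: shift_solution_def)
  then show ?thesis by (rule that) simp
next
  case False
  define S where "S = {N. f N}"
  define T where "T = odd_part (shift_offsets xs d)"
  have offset_bounds: "0 \<le> c * d + b \<and> c * d + b \<le> int H * d + int \<tau>"
    if "(c, b) \<in> set xs \<union> set as" for c b
    using offset_in_box[OF subsetD[OF box that]] \<open>0 < d\<close> by simp
  have T_bounds: "0 \<le> s \<and> s \<le> int H * d + int \<tau>" if "s \<in> T" for s
  proof -
    have "s \<in># shift_offsets xs d"
      using that unfolding T_def by (rule subsetD[OF odd_part_subset])
    then have "s \<in> set (map (\<lambda>(c, b). c * d + b) xs)"
      unfolding shift_offsets_def set_mset_mset .
    then show ?thesis
      using offset_bounds by auto
  qed
  have root_bounds: "- (int H * d + int \<tau>) \<le> N \<and> N \<le> 0"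
    if "card {s \<in> T. N + s \<in> S} = 1" for N
  proof -
    have "shift_parity xs d f N"
      using that by (simp add: shift_parity_iff_odd_part S_def T_def)
    then have "shift_parity as d (\<lambda>M. M = 0) N"
      using sol unfolding shift_solution_def by blast
    then obtain c b where "(c, b) \<in> set as" "N + c * d + b = 0"
      by (rule shift_parityE)
    with offset_bounds[of c b] show ?thesis
      by auto
  qed
  have support: "\<bar>N\<bar> \<le> int H * d + int \<tau>" if "N \<in> S" for N
  proof -
    have fin: "finite S" "finite T" "S \<noteq> {}" "T \<noteq> {}"
      using sol that False finite_odd_part by (auto simp: S_def T_def shift_solution_def)
    \<comment> \<open>Only \<open>s = Min T\<close> lights \<open>f\<close> at \<open>Max S - Min T\<close>, only \<open>s = Max T\<close> at \<open>Min S - Max T\<close>.\<close>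
    note extremal = extremal_shifts_unique[OF fin]
    have "Max S - Min T \<le> 0" "- (int H * d + int \<tau>) \<le> Min S - Max T"
      using root_bounds[of "Max S - Min T"] root_bounds[of "Min S - Max T"] extremal by auto
    moreover have "Min T \<le> int H * d + int \<tau>" "0 \<le> Max T"
      using T_bounds fin by auto
    moreover have "Min S \<le> N" "N \<le> Max S"
      using fin that by auto
    ultimately show ?thesis by linarith
  qed
  show ?thesis using that[OF sol] support by (simp add: S_def)
qed

lemma mult_add_eq_0_iff:
  fixes q x D :: int
  assumes "0 \<le> x" "x < D"
  shows "q * D + x = 0 \<longleftrightarrow> q = 0 \<and> x = 0"
proof
  assume sum: "q * D + x = 0"
  have "(q * D + x) div D = q" "(q * D + x) mod D = x"
    using assms by (simp_all add: add.commute[of "q * D"])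
  with sum show "q = 0 \<and> x = 0" by simp
qed simp

text \<open>
  \<open>insert_gaps d r L\<close> cuts \<open>\<int>\<close> into blocks of length \<open>d\<close> and inserts a gap of length \<open>L\<close>
  at offset \<open>r\<close> of every block.
\<close>

definition insert_gaps :: "int \<Rightarrow> int \<Rightarrow> int \<Rightarrow> int \<Rightarrow> int" where
  "insert_gaps d r L N = N div d * (d + L) + (if N mod d < r then N mod d else N mod d + L)"

lemma insert_gaps_eq:
  assumes "0 \<le> s" "s < d"
  shows "insert_gaps d r L (q * d + s) = q * (d + L) + (if s < r then s else s + L)"
proof -
  have "(q * d + s) div d = q" "(q * d + s) mod d = s"
    using assms by (simp_all add: add.commute[of "q * d"])
  then show ?thesis by (simp add: insert_gaps_def)
qed

lemma insert_gaps_div_mod: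
  assumes "0 < d" "0 \<le> L"
  shows "insert_gaps d r L N div (d + L) = N div d"
    and "insert_gaps d r L N mod (d + L) = (if N mod d < r then N mod d else N mod d + L)"
proof -
  have "0 \<le> N mod d" "N mod d < d" using \<open>0 < d\<close> by simp_all
  then have "0 \<le> (if N mod d < r then N mod d else N mod d + L)"
    and "(if N mod d < r then N mod d else N mod d + L) < d + L"
    using \<open>0 \<le> L\<close> by auto
  then show "insert_gaps d r L N div (d + L) = N div d"
    and "insert_gaps d r L N mod (d + L) = (if N mod d < r then N mod d else N mod d + L)"
    by (simp_all add: insert_gaps_def add.commute[of "N div d * (d + L)"])
qed

lemma inj_insert_gaps:
  assumes "0 < d" "0 \<le> L"
  shows "inj (insert_gaps d r L)"
proof (rule injI)
  fix N M
  assume eq: "insert_gaps d r L N = insert_gaps d r L M"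
  have "N div d = M div d"
    using insert_gaps_div_mod(1)[OF assms, of r N] insert_gaps_div_mod(1)[OF assms, of r M] eq by simp
  moreover have "N mod d = M mod d"
    using insert_gaps_div_mod(2)[OF assms, of r N] insert_gaps_div_mod(2)[OF assms, of r M] eq \<open>0 \<le> L\<close>
    by (auto split: if_splits)
  ultimately show "N = M"
    by (metis div_mult_mod_eq)
qed

lemma insert_gaps_eq_0_iff:
  assumes "0 < d" "0 \<le> L" "0 < r"
  shows "insert_gaps d r L N = 0 \<longleftrightarrow> N = 0"
proof
  assume "insert_gaps d r L N = 0"
  then have "N div d = 0" "N mod d = 0"
    using insert_gaps_div_mod[OF assms(1,2), of r N] assms by (auto split: if_splits)
  then show "N = 0"
    by (metis div_mult_mod_eq mult_zero_left add_0)
qed (use assms in \<open>simp add: insert_gaps_def\<close>)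

lemma insert_gaps_shift:
  assumes "0 < d" "0 \<le> r" "r + int \<tau> \<le> d" "0 \<le> b" "b \<le> int \<tau>"
    and window: "\<And>q j. 0 \<le> j \<Longrightarrow> j < int \<tau> \<Longrightarrow> g (q * (d + L) + r + j) = g (q * (d + L) + r + L + j)"
  shows "g (insert_gaps d r L (N + c * d + b)) = g (insert_gaps d r L N + c * (d + L) + b)"
proof -
  have gap: "g (Q * (d + L) + (if t < r then t else t + L)) = g (Q * (d + L) + t)"
    if "t < r + int \<tau>" for Q t
    using window[of "t - r" Q] that by (cases "t < r") (simp_all add: algebra_simps)
  define q s where "q = N div d" and "s = N mod d"
  have N: "N = q * d + s" and s: "0 \<le> s" "s < d"
    using \<open>0 < d\<close> by (simp_all add: q_def s_def)
  have insert_gaps_N: "insert_gaps d r L N = q * (d + L) + (if s < r then s else s + L)"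
    using insert_gaps_eq[OF s] N by simp
  consider (same_block) "s + b < d" | (next_block) "d \<le> s + b" by linarith
  then show ?thesis
  proof cases
    case same_block
    have "insert_gaps d r L (N + c * d + b) = (q + c) * (d + L) + (if s + b < r then s + b else s + b + L)"
      using insert_gaps_eq[of "s + b" d r L "q + c"] same_block s \<open>0 \<le> b\<close> N by (simp add: algebra_simps)
    moreover have "s + b < r + int \<tau>" if "s < r" using that \<open>b \<le> int \<tau>\<close> by linarith
    ultimately show ?thesis
      using gap[of "s + b" "q + c"] insert_gaps_N \<open>0 \<le> b\<close> by (cases "s < r") (auto simp: algebra_simps)
  next
    case next_block
    define t where "t = s + b - d"
    have t: "0 \<le> t" "t < d" "t < r + int \<tau>" "r \<le> s"
      using next_block s assms unfolding t_def by linarith+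
    have "insert_gaps d r L (N + c * d + b) = (q + c + 1) * (d + L) + (if t < r then t else t + L)"
      using insert_gaps_eq[OF t(1,2), of r L "q + c + 1"] N by (simp add: t_def algebra_simps)
    moreover have "insert_gaps d r L N + c * (d + L) + b = (q + c + 1) * (d + L) + t"
      using insert_gaps_N t(4) by (simp add: t_def algebra_simps)
    ultimately show ?thesis
      using gap[OF t(3)] by simp
  qed
qed

lemma shift_parity_cong:
  assumes "\<And>c b. (c, b) \<in> set ts \<Longrightarrow> g (N + c * d' + b) = h (M + c * d + b)"
  shows "shift_parity ts d' g N = shift_parity ts d h M"
  using assms by (induction ts) auto

lemma shift_solution_insert_gaps:
  assumes sol: "shift_solution xs as (d + L) f"
    and box: "set xs \<union> set as \<subseteq> UNIV \<times> {0..int \<tau>}"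
    and "0 < r" "r + int \<tau> \<le> d" "0 \<le> L"
    and window: "\<And>q j. 0 \<le> j \<Longrightarrow> j < int \<tau> \<Longrightarrow> f (q * (d + L) + r + j) = f (q * (d + L) + r + L + j)"
  shows "shift_solution xs as d (f \<circ> insert_gaps d r L)"
proof -
  let ?\<phi> = "insert_gaps d r L"
  have "0 < d" "0 \<le> r" using \<open>0 < r\<close> \<open>r + int \<tau> \<le> d\<close> by linarith+
  have zero_window: "(q * (d + L) + r + j = 0) \<longleftrightarrow> (q * (d + L) + r + L + j = 0)"
    if "0 \<le> j" "j < int \<tau>" for q j
    using mult_add_eq_0_iff[of "r + j" "d + L" q] mult_add_eq_0_iff[of "r + L + j" "d + L" q]
      that assms by (simp add: add.assoc)
  have "finite {N. f (?\<phi> N)}"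
    using finite_vimageI[OF _ inj_insert_gaps[OF \<open>0 < d\<close> \<open>0 \<le> L\<close>], of "{N. f N}"] sol
    by (simp add: shift_solution_def vimage_def)
  moreover have "shift_parity xs d (f \<circ> ?\<phi>) N = shift_parity as d (\<lambda>M. M = 0) N" for N
  proof -
    have "shift_parity xs d (f \<circ> ?\<phi>) N = shift_parity xs (d + L) f (?\<phi> N)"
    proof (intro shift_parity_cong)
      fix c b assume "(c, b) \<in> set xs"
      then have "0 \<le> b" "b \<le> int \<tau>" using box by auto
      from insert_gaps_shift[OF \<open>0 < d\<close> \<open>0 \<le> r\<close> \<open>r + int \<tau> \<le> d\<close> this window]
      show "(f \<circ> ?\<phi>) (N + c * d + b) = f (?\<phi> N + c * (d + L) + b)" by simp
    qed
    also have "\<dots> = shift_parity as (d + L) (\<lambda>M. M = 0) (?\<phi> N)"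
      using sol by (simp add: shift_solution_def)
    also have "\<dots> = shift_parity as d (\<lambda>M. M = 0) N"
    proof (intro shift_parity_cong)
      fix c b assume "(c, b) \<in> set as"
      then have b: "0 \<le> b" "b \<le> int \<tau>" using box by auto
      have "(?\<phi> N + c * (d + L) + b = 0) \<longleftrightarrow> (?\<phi> (N + c * d + b) = 0)"
        using insert_gaps_shift[OF \<open>0 < d\<close> \<open>0 \<le> r\<close> \<open>r + int \<tau> \<le> d\<close> b zero_window]
      by simp
      also have "\<dots> \<longleftrightarrow> N + c * d + b = 0"
        using insert_gaps_eq_0_iff[OF \<open>0 < d\<close> \<open>0 \<le> L\<close> \<open>0 < r\<close>] .
      finally show "(?\<phi> N + c * (d + L) + b = 0) = (N + c * d + b = 0)" .
    qed
    finally show ?thesis .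
  qed
  ultimately show ?thesis by (simp add: shift_solution_def)
qed

lemma exists_repeated_window:
  fixes f :: "int \<Rightarrow> bool"
  assumes support: "\<And>N. f N \<Longrightarrow> \<bar>N\<bar> \<le> int H * d + int \<tau>"
    and big: "2 ^ ((2 * H + 2) * \<tau>) + int \<tau> < d"
  obtains r L where "0 < r" "0 < L" "r + L + int \<tau> \<le> d"
    and "\<And>q j. 0 \<le> j \<Longrightarrow> j < int \<tau> \<Longrightarrow> f (q * d + r + j) = f (q * d + r + L + j)"
proof -
  have "(0::int) < 2 ^ ((2 * H + 2) * \<tau>)" by simp
  with big have "0 < d" "int \<tau> < d" by linarith+
  define B where "B = {- int H - 1..int H} \<times> {0..<int \<tau>}"
  define window where "window r = {(q, j) \<in> B. f (q * d + r + j)}" for r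
  define R where "R = {1..d - int \<tau>}"
  have "finite B" by (simp add: B_def)
  have "card (window ` R) \<le> card (Pow B)"
    using \<open>finite B\<close> by (intro card_mono) (auto simp: window_def)
  also have "\<dots> = 2 ^ ((2 * H + 2) * \<tau>)"
    using \<open>finite B\<close> by (simp add: card_Pow B_def card_cartesian_product nat_add_distrib nat_mult_distrib)
  also have "\<dots> < card R"
    using big by (simp add: R_def)
  finally have "\<not> inj_on window R"
    by (rule pigeonhole)
  then obtain r1 r2 where r12: "r1 \<in> R" "r2 \<in> R" "r1 < r2" "window r1 = window r2"
    using linorder_inj_onI' by metis
  have outside: "\<not> f (q * d + x)" if "q < - int H - 1 \<or> int H < q" "0 < x" "x < d" for q x
  proof
    assume "f (q * d + x)"
    then have bound: "\<bar>q * d + x\<bar> \<le> int H * d + int \<tau>" by (rule support)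
    show False
    proof (cases "int H < q")
      case True
      then have "(int H + 1) * d \<le> q * d" using \<open>0 < d\<close> by (intro mult_right_mono) auto
      with bound that \<open>int \<tau> < d\<close> show False by (simp add: algebra_simps abs_le_iff)
    next
      case False
      then have "q * d \<le> (- int H - 2) * d" using that \<open>0 < d\<close> by (intro mult_right_mono) auto
      with bound that \<open>int \<tau> < d\<close> show False by (simp add: algebra_simps abs_le_iff)
    qed
  qed
  show ?thesis
  proof
    show "0 < r1" "0 < r2 - r1" "r1 + (r2 - r1) + int \<tau> \<le> d"
      using r12 by (auto simp: R_def)
    fix q j :: int
    assume j: "0 \<le> j" "j < int \<tau>"
    show "f (q * d + r1 + j) = f (q * d + r1 + (r2 - r1) + j)"
    proof (cases "(q, j) \<in> B")
      case True
      then show ?thesis using r12(4) by (auto simp: window_def set_eq_iff)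
    next
      case False
      then have "q < - int H - 1 \<or> int H < q" using j by (auto simp: B_def)
      with r12 j show ?thesis
        using outside[of q "r1 + j"] outside[of q "r2 + j"] by (auto simp: R_def add.assoc)
    qed
  qed
qed

lemma shift_solution_smaller_shift:
  assumes sol: "shift_solution xs as d f"
    and box: "set xs \<union> set as \<subseteq> {0..int H} \<times> {0..int \<tau>}"
    and big: "2 ^ ((2 * H + 2) * \<tau>) + int \<tau> < d"
  obtains d' f' where "0 < d'" "d' < d" "shift_solution xs as d' f'"
proof -
  have "(0::int) < 2 ^ ((2 * H + 2) * \<tau>)" by simp
  with big have "0 < d" by linarith
  obtain f0 where sol0: "shift_solution xs as d f0"
    and support: "\<And>N. f0 N \<Longrightarrow> \<bar>N\<bar> \<le> int H * d + int \<tau>"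
    using shift_solution_bounded_support[OF sol \<open>0 < d\<close> box] by blast
  obtain r L where r: "0 < r" "0 < L" "r + L + int \<tau> \<le> d"
    and window: "\<And>q j. 0 \<le> j \<Longrightarrow> j < int \<tau> \<Longrightarrow> f0 (q * d + r + j) = f0 (q * d + r + L + j)"
    using exists_repeated_window[OF support big] by blast
  have sol0': "shift_solution xs as (d - L + L) f0"
    using sol0 by simp
  have box': "set xs \<union> set as \<subseteq> UNIV \<times> {0..int \<tau>}"
    using box by blast
  have r': "r + int \<tau> \<le> d - L" "0 \<le> L"
    using r by linarith+
  have window': "f0 (q * (d - L + L) + r + j) = f0 (q * (d - L + L) + r + L + j)"
    if "0 \<le> j" "j < int \<tau>" for q j
    using window[OF that] by simp
  have "shift_solution xs as (d - L) (f0 \<circ> insert_gaps (d - L) r L)"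
    by (rule shift_solution_insert_gaps[OF sol0' box' \<open>0 < r\<close> r' window'])
  moreover have "0 < d - L" "d - L < d" using r by linarith+
  ultimately show ?thesis by (rule that[rotated 2])
qed

lemma shift_solution_bounded_pos_shift:
  assumes box: "set xs \<union> set as \<subseteq> {0..int H} \<times> {0..int \<tau>}"
  shows "shift_solution xs as d f \<Longrightarrow> 0 < d \<Longrightarrow>
    \<exists>d' f'. 0 < d' \<and> d' \<le> 2 ^ ((2 * H + 2) * \<tau>) + int \<tau> \<and> shift_solution xs as d' f'"
proof (induction "nat d" arbitrary: d f rule: less_induct)
  case less
  show ?case
  proof (cases "d \<le> 2 ^ ((2 * H + 2) * \<tau>) + int \<tau>")
    case True
    with less.prems show ?thesis by (intro exI[of _ d] exI[of _ f]) simp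
  next
    case False
    then have "2 ^ ((2 * H + 2) * \<tau>) + int \<tau> < d" by simp
    then obtain d' f' where "0 < d'" "d' < d" "shift_solution xs as d' f'"
      by (rule shift_solution_smaller_shift[OF less.prems(1) box])
    moreover from \<open>0 < d'\<close> \<open>d' < d\<close> have "nat d' < nat d" by simp
    ultimately show ?thesis using less.hyps by blast
  qed
qed

lemma shift_parity_affine:
  assumes "\<sigma> * \<sigma> = 1"
  shows "shift_parity (map (\<lambda>(c, b). (\<sigma> * c + c\<^sub>0, b + b\<^sub>0)) ts) (\<sigma> * d) f N
    = shift_parity ts d f (N + c\<^sub>0 * \<sigma> * d + b\<^sub>0)"
proof (induction ts)
  case (Cons cb ts)
  obtain c b where "cb = (c, b)" by (cases cb)
  moreover have \<sigma>\<sigma>: "\<sigma> * (\<sigma> * x) = x" for x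
    using assms by (metis mult.assoc mult_1)
  ultimately show ?case
    using Cons by (simp add: algebra_simps \<sigma>\<sigma>)
qed simp

lemma shift_solution_affine:
  assumes "\<sigma> * \<sigma> = 1"
  shows "shift_solution (map (\<lambda>(c, b). (\<sigma> * c + c\<^sub>0, b + b\<^sub>0)) xs)
      (map (\<lambda>(c, b). (\<sigma> * c + c\<^sub>0, b + b\<^sub>0)) as) (\<sigma> * d) f
    \<longleftrightarrow> shift_solution xs as d f"
proof -
  let ?k = "c\<^sub>0 * \<sigma> * d + b\<^sub>0"
  have "(\<forall>N. shift_parity xs d f (N + ?k) = shift_parity as d (\<lambda>M. M = 0) (N + ?k))
      \<longleftrightarrow> (\<forall>N. shift_parity xs d f N = shift_parity as d (\<lambda>M. M = 0) N)"
  proof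
    assume shifted: "\<forall>N. shift_parity xs d f (N + ?k) = shift_parity as d (\<lambda>M. M = 0) (N + ?k)"
    show "\<forall>N. shift_parity xs d f N = shift_parity as d (\<lambda>M. M = 0) N"
    proof
      fix N
      show "shift_parity xs d f N = shift_parity as d (\<lambda>M. M = 0) N"
        using shifted[rule_format, of "N - ?k"] by simp
    qed
  qed simp
  then show ?thesis
    by (simp add: shift_solution_def shift_parity_affine[OF assms] add.assoc)
qed

lemma shift_solution_bounded_shift:
  assumes sol: "shift_solution xs as d f"
    and box: "set xs \<union> set as \<subseteq> {c\<^sub>0..c\<^sub>0 + int H} \<times> {b\<^sub>0..b\<^sub>0 + int \<tau>}"
  obtains d' f' where "\<bar>d'\<bar> \<le> 2 ^ ((2 * H + 2) * \<tau>) + int \<tau>" "shift_solution xs as d' f'"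
proof (cases "d = 0")
  case True
  with sol show ?thesis by (intro that[of 0 f]) simp_all
next
  case False
  define \<sigma> where "\<sigma> = sgn d"
  define c\<^sub>1 where "c\<^sub>1 = (if 0 < d then - c\<^sub>0 else c\<^sub>0 + int H)"
  let ?T = "map (\<lambda>(c, b). (\<sigma> * c + c\<^sub>1, b + - b\<^sub>0))"
  have \<sigma>: "\<sigma> * \<sigma> = 1" "\<sigma> * d = \<bar>d\<bar>"
    using False by (auto simp: \<sigma>_def sgn_if)
  have coord: "\<sigma> * c + c\<^sub>1 \<in> {0..int H}" if "c \<in> {c\<^sub>0..c\<^sub>0 + int H}" for c
    using that False by (cases "0 < d") (auto simp: \<sigma>_def c\<^sub>1_def)
  have box': "set (?T xs) \<union> set (?T as) \<subseteq> {0..int H} \<times> {0..int \<tau>}"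
  proof
    fix p assume "p \<in> set (?T xs) \<union> set (?T as)"
    then obtain c b where cb: "(c, b) \<in> set xs \<union> set as" and p: "p = (\<sigma> * c + c\<^sub>1, b + - b\<^sub>0)"
      by auto
    from cb box have "c \<in> {c\<^sub>0..c\<^sub>0 + int H}" "b \<in> {b\<^sub>0..b\<^sub>0 + int \<tau>}"
      by auto
    with p coord show "p \<in> {0..int H} \<times> {0..int \<tau>}"
      by auto
  qed
  have "shift_solution (?T xs) (?T as) (\<sigma> * d) f"
    using sol by (simp only: shift_solution_affine[OF \<sigma>(1)])
  then have "shift_solution (?T xs) (?T as) \<bar>d\<bar> f"
    by (simp only: \<sigma>(2))
  then have "\<exists>d'' f''. 0 < d'' \<and> d'' \<le> 2 ^ ((2 * H + 2) * \<tau>) + int \<tau>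
      \<and> shift_solution (?T xs) (?T as) d'' f''"
    using shift_solution_bounded_pos_shift[OF box'] False by simp
  then obtain d'' f'' where d'': "0 < d''" "d'' \<le> 2 ^ ((2 * H + 2) * \<tau>) + int \<tau>"
    and sol'': "shift_solution (?T xs) (?T as) d'' f''"
    by blast
  have "shift_solution xs as (\<sigma> * d'') f''"
    using sol'' shift_solution_affine[OF \<sigma>(1), of c\<^sub>1 "- b\<^sub>0" xs as "\<sigma> * d''" f''] \<sigma>(1)
    by (simp add: mult.assoc[symmetric])
  moreover have "\<bar>\<sigma> * d''\<bar> = d''"
    using d''(1) False by (simp add: \<sigma>_def abs_mult)
  ultimately show ?thesis
    using d''(2) by (intro that[of "\<sigma> * d''" f'']) simp_all
qed

lemma nonzero_letter_exp_iff: "letter_exp l s \<noteq> 0 \<longleftrightarrow> fst s = l"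
  by (simp add: letter_exp_def)

lemma abs_sum_list_le_nonzeros:
  assumes "\<And>x. \<bar>p x\<bar> \<le> (1::int)"
  shows "\<bar>sum_list (map p xs)\<bar> \<le> int (length (filter (\<lambda>x. p x \<noteq> 0) xs))"
proof (induction xs)
  case (Cons x xs)
  then show ?case using assms[of x] by (cases "p x = 0") (auto simp: abs_le_iff)
qed simp

lemma suffix_sums_diff_le:
  assumes p: "\<And>x. \<bar>p x\<bar> \<le> (1::int)" and total: "sum_list (map p xs) = 0"
    and "suffix u xs" "suffix v xs"
  shows "2 * \<bar>sum_list (map p u) - sum_list (map p v)\<bar> \<le> int (length (filter (\<lambda>x. p x \<noteq> 0) xs))"
proof -
  let ?S = "\<lambda>ys. sum_list (map p ys)" and ?K = "\<lambda>ys. int (length (filter (\<lambda>x. p x \<noteq> 0) ys))"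
  have *: "2 * \<bar>?S u - ?S v\<bar> \<le> ?K xs" if "suffix u v" "suffix v xs" for u v
  proof -
    obtain seg pre where "v = seg @ u" "xs = pre @ seg @ u"
      using \<open>suffix u v\<close> \<open>suffix v xs\<close> by (auto simp: suffix_def)
    moreover have "\<bar>?S seg\<bar> \<le> ?K seg" "\<bar>?S pre\<bar> \<le> ?K pre" "\<bar>?S u\<bar> \<le> ?K u"
      using abs_sum_list_le_nonzeros[of p, OF p] by blast+
    ultimately show ?thesis using total by auto
  qed
  from suffix_same_cases[OF \<open>suffix u xs\<close> \<open>suffix v xs\<close>] show ?thesis
    using *[of u v] *[of v u] assms(3,4) by (auto simp: abs_minus_commute)
qed

lemma suffix_sums_range:
  assumes p: "\<And>x. \<bar>p x\<bar> \<le> (1::int)" and total: "sum_list (map p xs) = 0"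
  obtains lo H where "2 * H \<le> length (filter (\<lambda>x. p x \<noteq> 0) xs)"
    and "(\<lambda>u. sum_list (map p u)) ` set (suffixes xs) \<subseteq> {lo..lo + int H}"
proof -
  define A where "A = (\<lambda>u. sum_list (map p u)) ` set (suffixes xs)"
  have A: "finite A" "A \<noteq> {}" by (auto simp: A_def)
  have "\<exists>u \<in> set (suffixes xs). Max A = sum_list (map p u)"
    and "\<exists>v \<in> set (suffixes xs). Min A = sum_list (map p v)"
    using Max_in[OF A] Min_in[OF A] unfolding A_def image_iff by blast+
  then obtain u v where uv: "suffix u xs" "suffix v xs"
    and MaxMin: "Max A = sum_list (map p u)" "Min A = sum_list (map p v)"
    by auto
  have "2 * (Max A - Min A) \<le> int (length (filter (\<lambda>x. p x \<noteq> 0) xs))"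
    unfolding MaxMin using suffix_sums_diff_le[OF p total uv] by (simp add: abs_if split: if_splits)
  moreover have "A \<subseteq> {Min A..Min A + int (nat (Max A - Min A))}"
    using A by auto
  ultimately show ?thesis
    using that[of "nat (Max A - Min A)" "Min A"] by (simp add: A_def)
qed

lemma exp_sum_suffixes_range:
  assumes "exp_sum l w = 0"
  obtains lo H where "2 * H \<le> length (filter (\<lambda>s. fst s = l) w)"
    and "exp_sum l ` set (suffixes w) \<subseteq> {lo..lo + int H}"
proof -
  have "\<bar>letter_exp l s\<bar> \<le> 1" for s
    by (simp add: letter_exp_def)
  moreover have "sum_list (map (letter_exp l) w) = 0"
    using assms by (simp add: exp_sum_def)
  ultimately obtain lo H where "2 * H \<le> length (filter (\<lambda>s. letter_exp l s \<noteq> 0) w)"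
    and "(\<lambda>u. sum_list (map (letter_exp l) u)) ` set (suffixes w) \<subseteq> {lo..lo + int H}"
    by (rule suffix_sums_range)
  then show ?thesis
    by (intro that[of H lo]) (simp_all add: nonzero_letter_exp_iff exp_sum_def[abs_def])
qed

lemma shifts_in_suffix_sums:
  "set (x_shifts w) \<union> set (a_shifts w)
     \<subseteq> exp_sum LX ` set (suffixes w) \<times> exp_sum LT ` set (suffixes w)"
proof (induction w)
  case (Cons s w)
  have w: "w \<in> set (suffixes (s # w))" and sw: "s # w \<in> set (suffixes (s # w))"
    by (simp_all add: suffix_ConsI)
  have "set (suffixes w) \<subseteq> set (suffixes (s # w))"
    by auto
  then have IH: "set (x_shifts w) \<union> set (a_shifts w)
      \<subseteq> exp_sum LX ` set (suffixes (s # w)) \<times> exp_sum LT ` set (suffixes (s # w))"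
    using Cons.IH by blast
  have "exp_sum LX w - (if snd s then 0 else 1) \<in> exp_sum LX ` set (suffixes (s # w))"
    if "fst s = LX"
    using that w sw by (cases "snd s") (auto simp: letter_exp_def intro: image_eqI)
  with IH w show ?case by auto
qed simp

lemma length_filter_letters_le:
  "length (filter (\<lambda>s. fst s = LX) w) + length (filter (\<lambda>s. fst s = LT) w) \<le> length w"
  by (induction w) auto

lemma shifts_in_small_box:
  assumes "exp_sum LX w = 0" "exp_sum LT w = 0"
  obtains c\<^sub>0 b\<^sub>0 H \<tau> where "2 * H + 2 * \<tau> \<le> length w"
    and "set (x_shifts w) \<union> set (a_shifts w) \<subseteq> {c\<^sub>0..c\<^sub>0 + int H} \<times> {b\<^sub>0..b\<^sub>0 + int \<tau>}"
proof -
  obtain c\<^sub>0 H where H: "2 * H \<le> length (filter (\<lambda>s. fst s = LX) w)"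
    and range\<^sub>x: "exp_sum LX ` set (suffixes w) \<subseteq> {c\<^sub>0..c\<^sub>0 + int H}"
    by (rule exp_sum_suffixes_range[OF assms(1)])
  obtain b\<^sub>0 \<tau> where \<tau>: "2 * \<tau> \<le> length (filter (\<lambda>s. fst s = LT) w)"
    and range\<^sub>t: "exp_sum LT ` set (suffixes w) \<subseteq> {b\<^sub>0..b\<^sub>0 + int \<tau>}"
    by (rule exp_sum_suffixes_range[OF assms(2)])
  have "2 * H + 2 * \<tau> \<le> length w"
    using H \<tau> length_filter_letters_le[of w] by linarith
  moreover have "set (x_shifts w) \<union> set (a_shifts w) \<subseteq> {c\<^sub>0..c\<^sub>0 + int H} \<times> {b\<^sub>0..b\<^sub>0 + int \<tau>}"
    using shifts_in_suffix_sums Sigma_mono[OF range\<^sub>x range\<^sub>t] by (rule order_trans)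
  ultimately show ?thesis
    by (rule that)
qed

lemma exp_bound_le_length_bound:
  fixes H \<tau> n :: nat
  assumes "2 * H + 2 * \<tau> \<le> n"
  shows "real_of_int (2 ^ ((2 * H + 2) * \<tau>) + int \<tau>)
    \<le> 2 powr (real n ^ 2 / 2) + 2 * real n ^ 2 + 3 * real n + 1"
proof -
  define e where "e = (2 * H + 2) * \<tau>"
  have "2 * e \<le> n * n"
  proof (cases "\<tau> = 0")
    case False
    with assms have "2 * H + 2 \<le> n" "2 * \<tau> \<le> n" by linarith+
    then have "(2 * H + 2) * (2 * \<tau>) \<le> n * n" by (rule mult_le_mono)
    then show ?thesis by (simp add: e_def algebra_simps)
  qed (simp add: e_def)
  then have "real e \<le> real n ^ 2 / 2"
    by (simp add: power2_eq_square flip: of_nat_mult)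
  then have "2 ^ e \<le> 2 powr (real n ^ 2 / 2)"
    by (simp add: powr_realpow[symmetric])
  moreover have "real_of_int (2 ^ e + int \<tau>) = 2 ^ e + real \<tau>"
    by simp
  moreover have "real \<tau> \<le> real n" "0 \<le> 2 * real n ^ 2"
    using assms by simp_all
  ultimately show ?thesis
    unfolding e_def by linarith
qed

theorem mainTheorem1:
  fixes w :: word
  assumes "sigma_x w = 0"
    and "\<exists>g. is_solution w g"
  shows "\<exists>g. is_solution w g \<and>
           \<bar>real_of_int (fst g)\<bar> \<le> 2 powr (real (length w) ^ 2 / 2) + 2 * real (length w) ^ 2
              + 3 * real (length w) + 1"
proof -
  obtain d f where "is_solution w (d, f)"
    using assms(2) by auto
  then have t: "exp_sum LT w = 0" and sol: "shift_solution (x_shifts w) (a_shifts w) d f"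
    using is_solution_iff_shift_solution[OF assms(1)] by simp_all
  have x: "exp_sum LX w = 0"
    using assms(1) by (simp add: sigma_x_eq_exp_sum)
  obtain c\<^sub>0 b\<^sub>0 H \<tau> where size: "2 * H + 2 * \<tau> \<le> length w"
    and box: "set (x_shifts w) \<union> set (a_shifts w) \<subseteq> {c\<^sub>0..c\<^sub>0 + int H} \<times> {b\<^sub>0..b\<^sub>0 + int \<tau>}"
    by (rule shifts_in_small_box[OF x t])
  obtain d' f' where d': "\<bar>d'\<bar> \<le> 2 ^ ((2 * H + 2) * \<tau>) + int \<tau>"
    and sol': "shift_solution (x_shifts w) (a_shifts w) d' f'"
    by (rule shift_solution_bounded_shift[OF sol box])
  have "\<bar>real_of_int d'\<bar> \<le> real_of_int (2 ^ ((2 * H + 2) * \<tau>) + int \<tau>)"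
    using d' by (simp only: of_int_abs[symmetric] of_int_le_iff)
  also have "\<dots> \<le> 2 powr (real (length w) ^ 2 / 2) + 2 * real (length w) ^ 2 + 3 * real (length w) + 1"
    by (rule exp_bound_le_length_bound[OF size])
  moreover have "is_solution w (d', f')"
    using is_solution_iff_shift_solution[OF assms(1)] t sol' by simp
  ultimately show ?thesis
    by (intro exI[of _ "(d', f')"]) simp
qed

end
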